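(* Let $P^1,\dots,P^4\in\mathbb{R}^n$ be in general position, let $Q^0$ be the equidistant point from $P^1,\dots,P^4$ with barycentric coordinate $\boldsymbol\lambda^0$, and suppose $\lambda^0_1<0$, $\lambda^0_2<0$, $\lambda^0_3\ge0$, $\lambda^0_4\ge0$. Let $Q^{1(1)}=\pi(Q^0|L(P^2,P^3,P^4))$ and $Q^{1(2)}=\pi(Q^0|L(P^1,P^3,P^4))$, with barycentric coordinates $\boldsymbol\lambda^{1(1)},\boldsymbol\lambda^{1(2)}$ about $P^1,\dots,P^4$, and suppose $\lambda^{1(2)}_1<0$. Suppose further $\lambda^{1(1)}_2\ge0$, $\lambda^{1(1)}_3<0$, $\lambda^{1(1)}_4\ge0$, and let $Q^{2\dagger}=\pi(Q^0|L(P^2,P^4))$. Then the center of the smallest enclosing circle of $P^1,\dots,P^4$ is $Q^\ast=Q^{2\dagger}$ and its radius is $d^\ast=d(P^2,Q^{2\dagger})$.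
   Context: $d$ is the Euclidean distance. Points are in general position if $P^2-P^1,\dots,P^m-P^1$ are linearly independent. $L(S^1,\dots,S^r)$ is the affine subspace spanned by the points; $\pi(Q'|L)$ is the orthogonal projection onto the affine subspace $L$. The barycentric coordinate of $Q\in L(P^1,\dots,P^m)$ is the unique $\boldsymbol\lambda$ with $\sum_i\lambda_i=1$, $Q=\sum_i\lambda_iP^i$. The equidistant point is the unique $Q^0\in L(P^1,\dots,P^m)$ with all $d(P^i,Q^0)$ equal. The smallest enclosing circle has center $Q^\ast$ attaining $\min_Q\max_i d(P^i,Q)$ and radius $d^\ast$ equal to this minimum. *)

theory Defs
  imports "HOL-Analysis.Analysis"
begin

text \<open>Points are indexed P 1, ..., P m (a function from nat into the space).\<close>

definition general_position :: "(nat \<Rightarrow> 'a::euclidean_space) \<Rightarrow> nat \<Rightarrow> bool" where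
  "general_position P m \<longleftrightarrow>
     (\<forall>c::nat \<Rightarrow> real. (\<Sum>i\<in>{2..m}. c i *\<^sub>R (P i - P 1)) = 0 \<longrightarrow> (\<forall>i\<in>{2..m}. c i = 0))"

definition aff_span :: "(nat \<Rightarrow> 'a::euclidean_space) \<Rightarrow> nat set \<Rightarrow> 'a set" where
  "aff_span P I = affine hull (P ` I)"

definition proj :: "'a::euclidean_space \<Rightarrow> 'a set \<Rightarrow> 'a" where
  "proj Q L = closest_point L Q"

definition bary :: "(nat \<Rightarrow> 'a::euclidean_space) \<Rightarrow> nat \<Rightarrow> 'a \<Rightarrow> (nat \<Rightarrow> real)" where
  "bary P m Q = (THE l. (\<forall>i. i \<notin> {1..m} \<longrightarrow> l i = 0) \<and>
                        (\<Sum>i\<in>{1..m}. l i) = 1 \<and> Q = (\<Sum>i\<in>{1..m}. l i *\<^sub>R P i))"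

definition equidistant_point :: "(nat \<Rightarrow> 'a::euclidean_space) \<Rightarrow> nat \<Rightarrow> 'a" where
  "equidistant_point P m = (THE Q. Q \<in> aff_span P {1..m} \<and>
                              (\<forall>i\<in>{1..m}. \<forall>j\<in>{1..m}. dist (P i) Q = dist (P j) Q))"

definition enc_radius :: "(nat \<Rightarrow> 'a::euclidean_space) \<Rightarrow> nat \<Rightarrow> 'a \<Rightarrow> real" where
  "enc_radius P m Q = Max ((\<lambda>i. dist (P i) Q) ` {1..m})"

definition is_smallest_enclosing :: "(nat \<Rightarrow> 'a::euclidean_space) \<Rightarrow> nat \<Rightarrow> 'a \<Rightarrow> real \<Rightarrow> bool" where
  "is_smallest_enclosing P m C r \<longleftrightarrow>
     (\<forall>Q. enc_radius P m C \<le> enc_radius P m Q) \<and>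
     (\<forall>Q. enc_radius P m Q = enc_radius P m C \<longrightarrow> Q = C) \<and>
     r = enc_radius P m C"

end

theory Submission
  imports Defs
begin

text \<open>
  Let C be the circumcentre of P 1, ..., P 4 and M the foot of C on the line through P 2 and
  P 4; as C is equidistant from P 2 and P 4, M is their midpoint. For every point y,
  |y - M|^2 - |P 2 - M|^2 = |y - C|^2 - |P 2 - C|^2 + 2 \<langle>y - P 2, C - M\<rangle>,
  so the ball around M through P 2 and P 4 contains P i as soon as \<langle>P i - P 2, C - M\<rangle> \<le> 0.
  For P 3 this comes from the negative coefficient of P 3 in the foot of C on the plane
  through P 2, P 3, P 4, and then for P 1 from writing C - P 2 in barycentric coordinates,
  using \<lambda>_1 < 0 and \<lambda>_3 \<ge> 0. Finally, by Apollonius' theorem every ball containing P 2 and P 4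
  has radius at least |P 2 - P 4| / 2, with equality only for the ball centred at the midpoint.
\<close>

section \<open>Orthogonal projection onto affine sets\<close>

lemma closest_point_affine_orthogonal:
  fixes A :: "'a::euclidean_space set"
  assumes "affine A" "A \<noteq> {}" "y \<in> A" "z \<in> A"
  shows "inner (x - closest_point A x) (y - z) = 0"
proof -
  let ?c = "closest_point A x"
  have closed: "closed A"
    using assms(1) by (rule affine_closed)
  have c: "?c \<in> A"
    using closed assms(2) by (rule closest_point_in_set)
  have le: "inner (x - ?c) (q - ?c) \<le> 0" if "q \<in> A" for q
    using affine_imp_convex[OF assms(1)] closed that by (rule closest_point_dot)
  have perp: "inner (x - ?c) (q - ?c) = 0" if "q \<in> A" for q
  proof -
    \<comment> \<open>the reflection of q in the foot point also lies in A\<close>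
    have "?c - (q - ?c) \<in> A"
      using mem_affine_3_minus2[OF assms(1) c that c, of 1] by simp
    from le[OF this] le[OF that] show ?thesis
      by (simp add: inner_diff_right)
  qed
  have "y - z = (y - ?c) - (z - ?c)" by simp
  then show ?thesis
    using perp[OF assms(3)] perp[OF assms(4)] by (simp add: inner_diff_right)
qed

lemma dist_closest_point_affine:
  fixes A :: "'a::euclidean_space set"
  assumes "affine A" "y \<in> A"
  shows "(dist x y)\<^sup>2 = (dist x (closest_point A x))\<^sup>2 + (dist (closest_point A x) y)\<^sup>2"
proof -
  let ?c = "closest_point A x"
  have "A \<noteq> {}" using assms(2) by auto
  then have "?c \<in> A"
    using affine_closed[OF assms(1)] by (simp add: closest_point_in_set)
  then have "inner (x - ?c) (?c - y) = 0"
    using \<open>A \<noteq> {}\<close> assms by (simp add: closest_point_affine_orthogonal)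
  then have "orthogonal (x - ?c) (?c - y)"
    by (simp add: orthogonal_def)
  from norm_add_Pythagorean[OF this] show ?thesis
    by (simp add: dist_norm)
qed

lemma closest_point_affine_sphere:
  fixes A :: "'a::euclidean_space set"
  assumes "affine A" "T \<subseteq> A" "T \<subseteq> sphere x r"
  shows "T \<subseteq> sphere (closest_point A x) (sqrt (r\<^sup>2 - (dist x (closest_point A x))\<^sup>2))"
proof
  fix q assume "q \<in> T"
  have "dist x q = r"
    using assms(3) \<open>q \<in> T\<close> by auto
  moreover have "q \<in> A"
    using assms(2) \<open>q \<in> T\<close> by auto
  ultimately have "(dist (closest_point A x) q)\<^sup>2 = r\<^sup>2 - (dist x (closest_point A x))\<^sup>2"
    using dist_closest_point_affine[OF assms(1), of q x] by simp
  then show "q \<in> sphere (closest_point A x) (sqrt (r\<^sup>2 - (dist x (closest_point A x))\<^sup>2))"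
    by (simp add: real_sqrt_unique)
qed

lemma affine_hull_sphere_centre_unique:
  fixes S :: "'a::real_inner set"
  assumes "x \<in> affine hull S" "y \<in> affine hull S" "S \<subseteq> sphere x r" "S \<subseteq> sphere y s"
  shows "x = y"
proof -
  obtain p where "p \<in> S"
    using assms(1) by fastforce
  have "inner (x - y) q = inner (x - y) p" if "q \<in> S" for q
  proof -
    have "dist x q = dist x p" "dist y q = dist y p"
      using assms(3,4) \<open>p \<in> S\<close> that by (auto simp: subset_iff)
    then have "inner (x - q) (x - q) = inner (x - p) (x - p)"
              "inner (y - q) (y - q) = inner (y - p) (y - p)"
      by (simp_all add: dist_norm norm_eq_sqrt_inner)
    then show ?thesis
      by (simp add: inner_diff_left inner_diff_right inner_commute algebra_simps)
  qed
  then have "affine hull S \<subseteq> {z. inner (x - y) z = inner (x - y) p}"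
    by (intro hull_minimal affine_hyperplane) auto
  then have "inner (x - y) x = inner (x - y) p" "inner (x - y) y = inner (x - y) p"
    using assms(1,2) by (auto simp: subset_iff)
  then have "inner (x - y) (x - y) = 0"
    by (simp add: inner_diff_right)
  then show ?thesis by simp
qed

lemma closest_point_affine_hull_2_sphere:
  fixes a b :: "'a::euclidean_space"
  assumes "{a, b} \<subseteq> sphere x r"
  shows "closest_point (affine hull {a, b}) x = midpoint a b"
proof (rule affine_hull_sphere_centre_unique)
  show "{a, b} \<subseteq> sphere (closest_point (affine hull {a, b}) x)
          (sqrt (r\<^sup>2 - (dist x (closest_point (affine hull {a, b}) x))\<^sup>2))"
    using closest_point_affine_sphere[OF affine_affine_hull hull_subset assms] .
  show "closest_point (affine hull {a, b}) x \<in> affine hull {a, b}"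
    by (simp add: closest_point_in_set)
  show "midpoint a b \<in> affine hull {a, b}"
    unfolding affine_hull_2 midpoint_def by (force simp: scaleR_right_distrib)
  show "{a, b} \<subseteq> sphere (midpoint a b) (dist a b / 2)"
    by (simp add: dist_midpoint)
qed

section \<open>Circumcentres\<close>

lemma sphere_insert:
  fixes S :: "'a::euclidean_space set"
  assumes "S \<noteq> {}" "S \<subseteq> sphere x r" "z \<notin> affine hull S"
  shows "\<exists>y s. insert z S \<subseteq> sphere y s"
proof -
  define c where "c = closest_point (affine hull S) z"
  define f where "f = z - c"
  have "c \<in> affine hull S"
    unfolding c_def using assms(1) by (simp add: closest_point_in_set)
  then have "f \<noteq> 0"
    unfolding f_def using assms(3) by auto
  then have f: "inner f f \<noteq> 0"
    by simp
  have perp: "inner f (q - c) = 0" if "q \<in> S" for q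
    using assms(1) hull_inc[OF that] \<open>c \<in> affine hull S\<close>
    unfolding f_def c_def by (simp add: closest_point_affine_orthogonal)
  \<comment> \<open>moving the centre along the normal f shifts all squared distances to S by the same
    amount; t is chosen so that the squared distance to z catches up with them\<close>
  define t where "t = (inner (x - z) (x - z) - r\<^sup>2) / (2 * inner f f)"
  define K where "K = r\<^sup>2 + 2 * t * inner f (x - c) + t\<^sup>2 * inner f f"
  have expand: "inner (x + t *\<^sub>R f - q) (x + t *\<^sub>R f - q)
      = inner (x - q) (x - q) + 2 * t * inner f (x - q) + t\<^sup>2 * inner f f" for q
  proof -
    have "x + t *\<^sub>R f - q = (x - q) + t *\<^sub>R f" by simp
    then show ?thesis
      by (simp only: inner_add_left inner_add_right inner_scaleR_left inner_scaleR_right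
          inner_commute[of f "x - q"] power2_eq_square) (simp add: distrib_left)
  qed
  have "inner (x + t *\<^sub>R f - q) (x + t *\<^sub>R f - q) = K" if "q \<in> insert z S" for q
  proof (cases "q = z")
    case True
    have "2 * t * inner f f = inner (x - z) (x - z) - r\<^sup>2"
      unfolding t_def using f by simp
    moreover have "inner f (x - z) = inner f (x - c) - inner f f"
      unfolding f_def by (simp add: inner_diff_right inner_diff_left)
    ultimately show ?thesis
      unfolding expand K_def True by (simp only: right_diff_distrib)
  next
    case False
    then have "q \<in> S" using that by simp
    then have "dist x q = r"
      using assms(2) by auto
    then have "inner (x - q) (x - q) = r\<^sup>2"
      by (metis dist_norm power2_norm_eq_inner)
    moreover have "inner f (x - q) = inner f (x - c)"
      using perp[OF \<open>q \<in> S\<close>] by (simp add: inner_diff_right)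
    ultimately show ?thesis
      unfolding expand K_def by simp
  qed
  then have "dist (x + t *\<^sub>R f) q = sqrt K" if "q \<in> insert z S" for q
    using that by (simp add: dist_norm norm_eq_sqrt_inner)
  then have "insert z S \<subseteq> sphere (x + t *\<^sub>R f) (sqrt K)"
    by auto
  then show ?thesis by blast
qed

lemma affine_independent_circumcentre:
  fixes S :: "'a::euclidean_space set"
  assumes "finite S" "S \<noteq> {}" "\<not> affine_dependent S"
  shows "\<exists>c\<in>affine hull S. \<exists>r. S \<subseteq> sphere c r"
proof -
  have "\<exists>x r. S \<subseteq> sphere x r"
    using assms(1,2,3)
  proof (induction S rule: finite_ne_induct)
    case (singleton a)
    have "{a} \<subseteq> sphere a 0" by simp
    then show ?case by blast
  next
    case (insert z S)
    have "\<not> affine_dependent S"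
      using affine_independent_subset[OF insert.prems subset_insertI] .
    then obtain x r where "S \<subseteq> sphere x r"
      using insert.IH by blast
    moreover have "z \<notin> affine hull (insert z S - {z})"
      using insert.prems unfolding affine_dependent_def by blast
    then have "z \<notin> affine hull S"
      using insert.hyps(3) by (simp add: insert_Diff_if)
    ultimately show ?case
      using sphere_insert[OF insert.hyps(2)] by blast
  qed
  then obtain x r where "S \<subseteq> sphere x r" by blast
  from closest_point_affine_sphere[OF affine_affine_hull hull_subset this]
  have "S \<subseteq> sphere (closest_point (affine hull S) x)
               (sqrt (r\<^sup>2 - (dist x (closest_point (affine hull S) x))\<^sup>2))" .
  moreover have "closest_point (affine hull S) x \<in> affine hull S"
    using assms(2) by (simp add: closest_point_in_set)
  ultimately show ?thesis by blast
qed

section \<open>General position and barycentric coordinates\<close>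

lemma general_position_combination_eq_0:
  assumes "general_position P m" "sum c {1..m} = 0" "(\<Sum>i\<in>{1..m}. c i *\<^sub>R P i) = 0"
    and "i \<in> {1..m}"
  shows "c i = 0"
proof -
  have m: "1 \<le> m" using assms(4) by simp
  have "(\<Sum>i\<in>{2..m}. c i *\<^sub>R (P i - P 1)) = (\<Sum>i\<in>{1..m}. c i *\<^sub>R (P i - P 1))"
    using sum.atLeast_Suc_atMost[OF m, of "\<lambda>i. c i *\<^sub>R (P i - P 1)"]
    by (simp add: numeral_2_eq_2)
  also have "\<dots> = (\<Sum>i\<in>{1..m}. c i *\<^sub>R P i) - sum c {1..m} *\<^sub>R P 1"
    by (simp add: scaleR_diff_right sum_subtractf scaleR_sum_left)
  finally have "(\<Sum>i\<in>{2..m}. c i *\<^sub>R (P i - P 1)) = 0"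
    using assms(2,3) by simp
  then have c: "\<forall>j\<in>{2..m}. c j = 0"
    using assms(1) unfolding general_position_def by blast
  show ?thesis
  proof (cases "i = 1")
    case True
    have "sum c {1..m} = c 1 + sum c {2..m}"
      using sum.atLeast_Suc_atMost[OF m, of c] by (simp add: numeral_2_eq_2)
    then show ?thesis
      using True assms(2) c by simp
  next
    case False
    then show ?thesis
      using assms(4) c by simp
  qed
qed

lemma general_position_inj_on:
  assumes "general_position P m"
  shows "inj_on P {1..m}"
proof (rule inj_onI, rule ccontr)
  fix i j assume ij: "i \<in> {1..m}" "j \<in> {1..m}" "P i = P j" "i \<noteq> j"
  define c where "c k = (if k = i then 1 else 0) - (if k = j then 1 else 0 :: real)" for k
  have "sum c {1..m} = 0"
    using ij unfolding c_def by (simp add: sum_subtractf)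
  moreover have "(\<Sum>k\<in>{1..m}. c k *\<^sub>R P k) = 0"
    using ij unfolding c_def by (simp add: scaleR_diff_left sum_subtractf if_smult cong: if_cong)
  ultimately have "c i = 0"
    using general_position_combination_eq_0[OF assms] ij(1) by blast
  then show False
    using ij(4) unfolding c_def by simp
qed

lemma general_position_affine_independent:
  assumes "general_position P m"
  shows "\<not> affine_dependent (P ` {1..m})"
proof
  assume "affine_dependent (P ` {1..m})"
  then obtain U where U: "sum U (P ` {1..m}) = 0" "(\<Sum>v\<in>P ` {1..m}. U v *\<^sub>R v) = 0"
    and "\<exists>v\<in>P ` {1..m}. U v \<noteq> 0"
    unfolding affine_dependent_explicit_finite[OF finite_imageI[OF finite_atLeastAtMost]] by blast
  then obtain i where i: "i \<in> {1..m}" "U (P i) \<noteq> 0" by blast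
  have inj: "inj_on P {1..m}"
    using assms by (rule general_position_inj_on)
  have "sum (U \<circ> P) {1..m} = 0" "(\<Sum>k\<in>{1..m}. (U \<circ> P) k *\<^sub>R P k) = 0"
    using U unfolding sum.reindex[OF inj] by (simp_all add: comp_def)
  then have "(U \<circ> P) i = 0"
    using general_position_combination_eq_0[OF assms _ _ i(1)] by blast
  with i(2) show False by simp
qed

lemma bary_eqI:
  assumes gp: "general_position P m"
    and l: "sum l {1..m} = 1" "Q = (\<Sum>i\<in>{1..m}. l i *\<^sub>R P i)" "\<forall>i. i \<notin> {1..m} \<longrightarrow> l i = 0"
  shows "bary P m Q = l"
  unfolding bary_def
proof (rule the_equality)
  show "(\<forall>i. i \<notin> {1..m} \<longrightarrow> l i = 0) \<and> sum l {1..m} = 1 \<and> Q = (\<Sum>i\<in>{1..m}. l i *\<^sub>R P i)"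
    using l by blast
next
  fix k assume k: "(\<forall>i. i \<notin> {1..m} \<longrightarrow> k i = 0) \<and> sum k {1..m} = 1
                   \<and> Q = (\<Sum>i\<in>{1..m}. k i *\<^sub>R P i)"
  have "sum (\<lambda>i. k i - l i) {1..m} = 0"
    using k l by (simp add: sum_subtractf)
  moreover have "(\<Sum>i\<in>{1..m}. (k i - l i) *\<^sub>R P i) = 0"
    using k l by (simp add: scaleR_diff_left sum_subtractf)
  ultimately have "k i - l i = 0" if "i \<in> {1..m}" for i
    using general_position_combination_eq_0[OF gp] that by blast
  then show "k = l"
    using k l(3) by (metis eq_iff_diff_eq_0 ext)
qed

lemma bary_aff_span:
  assumes gp: "general_position P m" and I: "I \<subseteq> {1..m}" and Q: "Q \<in> aff_span P I"
  shows "sum (bary P m Q) I = 1" "Q = (\<Sum>i\<in>I. bary P m Q i *\<^sub>R P i)"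
proof -
  have fin: "finite I"
    using I by (rule finite_subset) simp
  have inj: "inj_on P I"
    using general_position_inj_on[OF gp] I by (rule inj_on_subset)
  obtain u where u: "sum u (P ` I) = 1" "(\<Sum>v\<in>P ` I. u v *\<^sub>R v) = Q"
    using Q unfolding aff_span_def affine_hull_finite[OF finite_imageI[OF fin]] by blast
  define l where "l i = (if i \<in> I then u (P i) else 0)" for i
  have "bary P m Q = l"
  proof (rule bary_eqI[OF gp])
    have "sum l {1..m} = sum l I"
      using I by (intro sum.mono_neutral_right) (auto simp: l_def)
    moreover have "(\<Sum>i\<in>{1..m}. l i *\<^sub>R P i) = (\<Sum>i\<in>I. l i *\<^sub>R P i)"
      using I by (intro sum.mono_neutral_right) (auto simp: l_def)
    ultimately
    show "sum l {1..m} = 1" "Q = (\<Sum>i\<in>{1..m}. l i *\<^sub>R P i)"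
      using u by (simp_all add: l_def sum.reindex[OF inj])
    show "\<forall>i. i \<notin> {1..m} \<longrightarrow> l i = 0"
      using I unfolding l_def by auto
  qed
  then have bary: "bary P m Q i = u (P i)" if "i \<in> I" for i
    using that unfolding l_def by simp
  show "sum (bary P m Q) I = 1"
    using u(1) by (simp add: bary sum.reindex[OF inj])
  show "Q = (\<Sum>i\<in>I. bary P m Q i *\<^sub>R P i)"
    using u(2) by (simp add: bary sum.reindex[OF inj])
qed

lemma equidistant_point_circumcentre:
  assumes gp: "general_position P m" and "m \<noteq> 0"
  shows "equidistant_point P m \<in> aff_span P {1..m}"
    and "P ` {1..m} \<subseteq> sphere (equidistant_point P m) (dist (P 1) (equidistant_point P m))"
proof -
  let ?S = "P ` {1..m}"
  let ?E = "\<lambda>Q. Q \<in> aff_span P {1..m} \<and> (\<forall>i\<in>{1..m}. \<forall>j\<in>{1..m}. dist (P i) Q = dist (P j) Q)"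
  have one: "1 \<in> {1..m}"
    using \<open>m \<noteq> 0\<close> by simp
  have sphere_iff: "?S \<subseteq> sphere Q (dist (P 1) Q) \<longleftrightarrow>
                      (\<forall>i\<in>{1..m}. \<forall>j\<in>{1..m}. dist (P i) Q = dist (P j) Q)" for Q
  proof
    assume S: "?S \<subseteq> sphere Q (dist (P 1) Q)"
    have "dist (P i) Q = dist (P 1) Q" if "i \<in> {1..m}" for i
    proof -
      have "P i \<in> sphere Q (dist (P 1) Q)"
        using S that by blast
      then show ?thesis
        by (simp add: dist_commute)
    qed
    then show "\<forall>i\<in>{1..m}. \<forall>j\<in>{1..m}. dist (P i) Q = dist (P j) Q"
      by metis
  next
    assume H: "\<forall>i\<in>{1..m}. \<forall>j\<in>{1..m}. dist (P i) Q = dist (P j) Q"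
    have "dist Q (P i) = dist (P 1) Q" if "i \<in> {1..m}" for i
      using H[rule_format, OF that one] by (simp add: dist_commute)
    then show "?S \<subseteq> sphere Q (dist (P 1) Q)"
      by (simp add: image_subset_iff)
  qed
  have "\<exists>c\<in>affine hull ?S. \<exists>r. ?S \<subseteq> sphere c r"
    using one by (intro affine_independent_circumcentre general_position_affine_independent gp) auto
  then obtain c r where c: "c \<in> affine hull ?S" "?S \<subseteq> sphere c r"
    by blast
  have "P 1 \<in> sphere c r"
    using c(2) one by blast
  then have "r = dist (P 1) c"
    by (simp add: dist_commute)
  then have "?E c"
    using c unfolding sphere_iff[symmetric] aff_span_def by simp
  moreover have "Q = c" if "?E Q" for Q
  proof -
    have "Q \<in> affine hull ?S" "?S \<subseteq> sphere Q (dist (P 1) Q)"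
      using that unfolding aff_span_def by (simp_all only: sphere_iff) blast
    then show ?thesis
      using affine_hull_sphere_centre_unique[OF _ c(1) _ c(2)] by simp
  qed
  ultimately have "?E (equidistant_point P m)"
    unfolding equidistant_point_def by (rule theI)
  then show "equidistant_point P m \<in> aff_span P {1..m}"
    and "?S \<subseteq> sphere (equidistant_point P m) (dist (P 1) (equidistant_point P m))"
    by (simp_all only: sphere_iff) blast
qed

section \<open>The smallest enclosing ball\<close>

lemma dist_sq_diff_eq_inner:
  fixes y p c m :: "'a::real_inner"
  assumes "dist y c = dist p c"
  shows "(dist y m)\<^sup>2 - (dist p m)\<^sup>2 = 2 * inner (y - p) (c - m)"
proof -
  have "(dist y m)\<^sup>2 - (dist p m)\<^sup>2 = (dist y c)\<^sup>2 - (dist p c)\<^sup>2 + 2 * inner (y - p) (c - m)"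
    unfolding dist_norm power2_norm_eq_inner
    by (simp add: inner_diff_left inner_diff_right inner_commute algebra_simps)
  then show ?thesis
    using assms by simp
qed

lemma closest_point_plane_inner_le_0:
  fixes p2 p3 p4 c :: "'a::euclidean_space"
  assumes foot: "closest_point (affine hull {p2, p3, p4}) c = u *\<^sub>R p2 + v *\<^sub>R p3 + w *\<^sub>R p4"
    and "u + v + w = 1" "v < 0"
  shows "inner (p3 - p2) (c - closest_point (affine hull {p2, p4}) c) \<le> 0"
proof -
  define L where "L = affine hull {p2, p4}"
  define H where "H = affine hull {p2, p3, p4}"
  define M where "M = closest_point L c"
  define F where "F = closest_point H c"
  have LH: "L \<subseteq> H"
    unfolding L_def H_def by (rule hull_mono) auto
  have L: "p2 \<in> L" "p4 \<in> L" "M \<in> L"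
    unfolding L_def M_def by (simp_all add: hull_inc closest_point_in_set)
  have H: "p2 \<in> H" "p3 \<in> H"
    unfolding H_def by (simp_all add: hull_inc)
  have perpL: "inner (c - M) (y - z) = 0" if "y \<in> L" "z \<in> L" for y z
    using that unfolding M_def L_def
    by (intro closest_point_affine_orthogonal affine_affine_hull) auto
  have perpH: "inner (c - F) (y - z) = 0" if "y \<in> H" "z \<in> H" for y z
    using that unfolding F_def H_def
    by (intro closest_point_affine_orthogonal affine_affine_hull) auto
  \<comment> \<open>M is also the foot of F on L, because c - F is orthogonal to H \<supseteq> L\<close>
  have FM: "inner (F - M) (y - p2) = 0" if "y \<in> L" for y
  proof -
    have "inner (F - M) (y - p2) = inner (c - M) (y - p2) - inner (c - F) (y - p2)"
      by (simp add: inner_diff_left)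
    then show ?thesis
      using perpL[OF that L(1)] perpH[of y p2] LH that L(1) by auto
  qed
  have "F - p2 = F - (u + v + w) *\<^sub>R p2"
    using assms(2) by simp
  also have "\<dots> = v *\<^sub>R (p3 - p2) + w *\<^sub>R (p4 - p2)"
    unfolding F_def H_def foot by (simp add: algebra_simps)
  finally have "inner (F - p2) (F - M) = v * inner (p3 - p2) (F - M)"
    using FM[OF L(2)] by (simp add: inner_add_left inner_add_right inner_commute)
  moreover have "inner (F - p2) (F - M) = inner (F - M) (F - M) + inner (F - M) (M - p2)"
    by (simp add: inner_diff_left inner_diff_right inner_commute)
  ultimately have "0 \<le> v * inner (p3 - p2) (F - M)"
    using FM[OF L(3)] inner_ge_zero[of "F - M"] by linarith
  then have "inner (p3 - p2) (F - M) \<le> 0"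
    using \<open>v < 0\<close> by (simp add: zero_le_mult_iff)
  moreover have "inner (p3 - p2) (c - F) = 0"
    using perpH[OF H(2,1)] by (simp add: inner_commute)
  ultimately have "inner (p3 - p2) (c - M) \<le> 0"
    by (simp add: inner_diff_right)
  then show ?thesis
    unfolding M_def L_def .
qed

lemma sphere_edge_midpoint_encloses:
  fixes p1 p2 p3 p4 c :: "'a::euclidean_space"
  assumes sph: "{p1, p2, p3, p4} \<subseteq> sphere c r"
    and c: "c = a1 *\<^sub>R p1 + a2 *\<^sub>R p2 + a3 *\<^sub>R p3 + a4 *\<^sub>R p4" "a1 + a2 + a3 + a4 = 1"
      "a1 < 0" "0 \<le> a3"
    and p3: "inner (p3 - p2) (c - closest_point (affine hull {p2, p4}) c) \<le> 0"
  shows "{p1, p2, p3, p4} \<subseteq> cball (midpoint p2 p4) (dist p2 (midpoint p2 p4))"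
proof -
  define M where "M = closest_point (affine hull {p2, p4}) c"
  have M: "M = midpoint p2 p4"
    unfolding M_def using sph by (intro closest_point_affine_hull_2_sphere) auto
  have L: "p2 \<in> affine hull {p2, p4}" "p4 \<in> affine hull {p2, p4}" "M \<in> affine hull {p2, p4}"
    unfolding M_def by (simp_all add: hull_inc closest_point_in_set)
  have perp: "inner (c - M) (y - z) = 0" if "y \<in> affine hull {p2, p4}" "z \<in> affine hull {p2, p4}" for y z
    unfolding M_def using that
    by (intro closest_point_affine_orthogonal affine_affine_hull) auto
  have "c - p2 = c - (a1 + a2 + a3 + a4) *\<^sub>R p2"
    using c(2) by simp
  also have "\<dots> = a1 *\<^sub>R (p1 - p2) + a3 *\<^sub>R (p3 - p2) + a4 *\<^sub>R (p4 - p2)"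
    unfolding c(1) by (simp add: algebra_simps)
  finally have "inner (c - p2) (c - M)
      = a1 * inner (p1 - p2) (c - M) + a3 * inner (p3 - p2) (c - M)"
    using perp[OF L(2,1)] by (simp add: inner_add_left inner_add_right inner_commute)
  moreover have "inner (c - p2) (c - M) = inner (c - M) (c - M) + inner (c - M) (M - p2)"
    by (simp add: inner_diff_left inner_diff_right inner_commute)
  ultimately have "0 \<le> a1 * inner (p1 - p2) (c - M) + a3 * inner (p3 - p2) (c - M)"
    using perp[OF L(3,1)] inner_ge_zero[of "c - M"] by linarith
  moreover have "a3 * inner (p3 - p2) (c - M) \<le> 0"
    using p3 c(4) unfolding M_def by (simp add: mult_nonneg_nonpos)
  ultimately have "a1 * inner (p1 - p2) (c - M) \<ge> 0"
    by linarith
  then have p1: "inner (p1 - p2) (c - M) \<le> 0"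
    using c(3) by (simp add: zero_le_mult_iff)
  have le: "dist y M \<le> dist p2 M" if "y \<in> {p1, p3}" for y
  proof -
    have "dist y c = dist p2 c"
      using sph that by (auto simp: dist_commute)
    then have "(dist y M)\<^sup>2 - (dist p2 M)\<^sup>2 = 2 * inner (y - p2) (c - M)"
      by (rule dist_sq_diff_eq_inner)
    moreover have "inner (y - p2) (c - M) \<le> 0"
      using that p1 p3 unfolding M_def by auto
    ultimately have "(dist y M)\<^sup>2 \<le> (dist p2 M)\<^sup>2"
      by linarith
    then show ?thesis
      by (rule power2_le_imp_le) simp
  qed
  moreover have "dist p4 M = dist p2 M"
    unfolding M by (simp add: dist_midpoint)
  ultimately have "dist y M \<le> dist p2 M" if "y \<in> {p1, p2, p3, p4}" for y
    using that by auto
  then show ?thesis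
    unfolding M[symmetric] by (simp add: subset_iff dist_commute)
qed

lemma dist_midpoint_Apollonius:
  fixes a b x :: "'a::real_inner"
  shows "(dist a x)\<^sup>2 + (dist b x)\<^sup>2 = 2 * (dist (midpoint a b) x)\<^sup>2 + (dist a b)\<^sup>2 / 2"
  unfolding dist_norm midpoint_def power2_norm_eq_inner
  by (simp add: inner_diff_left inner_diff_right inner_add_left inner_add_right inner_commute
      algebra_simps) (simp add: field_simps)

lemma is_smallest_enclosing_midpoint:
  fixes P :: "nat \<Rightarrow> 'a::euclidean_space"
  assumes jk: "j \<in> {1..m}" "k \<in> {1..m}"
    and enclosed: "P ` {1..m} \<subseteq> cball (midpoint (P j) (P k)) (dist (P j) (midpoint (P j) (P k)))"
  shows "is_smallest_enclosing P m (midpoint (P j) (P k)) (dist (P j) (midpoint (P j) (P k)))"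
proof -
  define M where "M = midpoint (P j) (P k)"
  define r where "r = dist (P j) M"
  have le_enc: "dist (P i) Q \<le> enc_radius P m Q" if "i \<in> {1..m}" for i Q
    unfolding enc_radius_def using that by (intro Max_ge) auto
  have enc_M: "enc_radius P m M = r"
    unfolding enc_radius_def
  proof (rule Max_eqI)
    show "y \<le> r" if "y \<in> (\<lambda>i. dist (P i) M) ` {1..m}" for y
      using that enclosed unfolding M_def r_def by (auto simp: dist_commute)
    show "r \<in> (\<lambda>i. dist (P i) M) ` {1..m}"
      unfolding r_def using jk(1) by blast
  qed simp
  have enc_lower: "r\<^sup>2 + (dist M Q)\<^sup>2 \<le> (enc_radius P m Q)\<^sup>2" for Q
  proof -
    have sq: "(dist (P i) Q)\<^sup>2 \<le> (enc_radius P m Q)\<^sup>2" if "i \<in> {1..m}" for i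
      using le_enc[OF that] by (simp add: power_mono)
    have "(dist (P j) Q)\<^sup>2 + (dist (P k) Q)\<^sup>2 = 2 * (dist M Q)\<^sup>2 + 2 * r\<^sup>2"
      unfolding M_def r_def dist_midpoint_Apollonius dist_midpoint by (simp add: power_divide)
    then show ?thesis
      using sq[OF jk(1)] sq[OF jk(2)] by linarith
  qed
  have enc_nonneg: "0 \<le> enc_radius P m Q" for Q
    using le_enc[OF jk(1)] zero_le_dist order_trans by blast
  show ?thesis
    unfolding is_smallest_enclosing_def M_def[symmetric] r_def[symmetric] enc_M
  proof (intro conjI allI impI refl)
    fix Q
    have "r\<^sup>2 \<le> (enc_radius P m Q)\<^sup>2"
      using enc_lower[of Q] zero_le_power2[of "dist M Q"] by linarith
    then show "r \<le> enc_radius P m Q"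
      using enc_nonneg by (rule power2_le_imp_le)
  next
    fix Q assume "enc_radius P m Q = r"
    then have "(dist M Q)\<^sup>2 \<le> 0"
      using enc_lower[of Q] by simp
    then show "Q = M"
      by simp
  qed
qed

theorem theorem11:
  fixes P :: "nat \<Rightarrow> 'a::euclidean_space"
  assumes gp: "general_position P 4"
    and l0: "bary P 4 (equidistant_point P 4) 1 < 0"
            "bary P 4 (equidistant_point P 4) 2 < 0"
            "bary P 4 (equidistant_point P 4) 3 \<ge> 0"
            "bary P 4 (equidistant_point P 4) 4 \<ge> 0"
    and l12: "bary P 4 (proj (equidistant_point P 4) (aff_span P {1,3,4})) 1 < 0"
    and l11: "bary P 4 (proj (equidistant_point P 4) (aff_span P {2,3,4})) 2 \<ge> 0"
             "bary P 4 (proj (equidistant_point P 4) (aff_span P {2,3,4})) 3 < 0"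
             "bary P 4 (proj (equidistant_point P 4) (aff_span P {2,3,4})) 4 \<ge> 0"
  shows "is_smallest_enclosing P 4
           (proj (equidistant_point P 4) (aff_span P {2,4}))
           (dist (P 2) (proj (equidistant_point P 4) (aff_span P {2,4})))"
proof -
  \<comment> \<open>of the sign conditions only l0(1), l0(3) and l11(2) are needed\<close>
  define C where "C = equidistant_point P 4"
  define F where "F = proj C (aff_span P {2,3,4})"
  define a where "a = bary P 4 C"
  define b where "b = bary P 4 F"
  have I: "{1..4::nat} = {1,2,3,4}" by auto
  have C: "C \<in> aff_span P {1..4}" "{P 1, P 2, P 3, P 4} \<subseteq> sphere C (dist (P 1) C)"
    using equidistant_point_circumcentre[OF gp] unfolding C_def I by simp_all
  from bary_aff_span[OF gp order_refl C(1), folded a_def, unfolded I]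
  have C_bary: "C = a 1 *\<^sub>R P 1 + a 2 *\<^sub>R P 2 + a 3 *\<^sub>R P 3 + a 4 *\<^sub>R P 4"
    "a 1 + a 2 + a 3 + a 4 = 1"
    by (simp_all add: add.assoc)
  have F: "F \<in> aff_span P {2,3,4}"
    unfolding F_def proj_def aff_span_def by (simp add: closest_point_in_set)
  from bary_aff_span[OF gp _ F, folded b_def]
  have F_bary: "F = b 2 *\<^sub>R P 2 + b 3 *\<^sub>R P 3 + b 4 *\<^sub>R P 4" "b 2 + b 3 + b 4 = 1"
    by (simp_all add: add.assoc)
  have "closest_point (affine hull {P 2, P 3, P 4}) C = F"
    by (simp add: F_def proj_def aff_span_def)
  moreover have "b 3 < 0"
    using l11(2) unfolding b_def F_def C_def .
  ultimately have "inner (P 3 - P 2) (C - closest_point (affine hull {P 2, P 4}) C) \<le> 0"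
    using F_bary by (intro closest_point_plane_inner_le_0) simp_all
  moreover have "a 1 < 0" "0 \<le> a 3"
    using l0(1,3) unfolding a_def C_def by simp_all
  ultimately have "{P 1, P 2, P 3, P 4} \<subseteq> cball (midpoint (P 2) (P 4)) (dist (P 2) (midpoint (P 2) (P 4)))"
    using C(2) C_bary by (intro sphere_edge_midpoint_encloses)
  then have "P ` {1..4} \<subseteq> cball (midpoint (P 2) (P 4)) (dist (P 2) (midpoint (P 2) (P 4)))"
    unfolding I by simp
  then have "is_smallest_enclosing P 4 (midpoint (P 2) (P 4)) (dist (P 2) (midpoint (P 2) (P 4)))"
    by (rule is_smallest_enclosing_midpoint[rotated 2]) simp_all
  moreover have "proj C (aff_span P {2,4}) = midpoint (P 2) (P 4)"
    unfolding proj_def aff_span_def using C(2) by (simp add: closest_point_affine_hull_2_sphere)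
  ultimately show ?thesis
    unfolding C_def[symmetric] by simp
qed

end
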